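(* For every integer $n\ge 2$, the $n$-abomination $\mathbb{X}_n$ has width $2^{n+2}$; that is, $\mathbb{X}_n$ contains an antichain with $2^{n+2}$ elements and every antichain in $\mathbb{X}_n$ has at most $2^{n+2}$ elements.
   Context: $\mathbb{N}=\{0,1,2,\dots\}$. Fix an integer $n\ge 2$ and put $N=2^{n+1}-1$. Let $T_n$ be the set of triples $\langle k_1,k_2,k_3\rangle$ of pairwise distinct natural numbers $\le N$, with a fixed enumeration $T_n=\{s_0,\dots,s_t\}$. Let $U_n$ be a set of pairwise distinct elements $a_m,b_m$ ($m\in\mathbb{N}$) and $c_{m,k},d_{m,k},e^a_{m,k},e^b_{m,k}$ ($m\in\mathbb{N}$, $0\le k\le N$). Define $x\prec y$ on $U_n$ iff one of: (1) $x=a_m$ and $y\in\{c_{m,k_1},c_{m,k_2}\}$, where $s_j=\langle k_1,k_2,k_3\rangle$ with $j\equiv m \bmod (t+1)$; (2) $x=b_m$ and $y\in\{c_{m,k_1},c_{m,k_3}\}$, with $s_j$ as in (1); (3) $m\ge1$, $x=c_{m,k}$, and either $y=e^a_{m-1,j}$ with $j\ne k$, or $y=e^b_{m-1,i}$ for any $i\le N$; (4) $x=d_{m,k}$ and $y=c_{m,j}$ with $j\neq k$; (5) $x=e^a_{m,k}$ and either $y=a_m$ or $y=d_{m,j}$ with $j\ne k$; (6) $x=e^b_{m,k}$ and either $y=b_m$ or $y=d_{m,j}$ with $j\ne k$. Let $\le$ be the reflexive transitive closure of $\prec$. The $n$-abomination $\mathbb{X}_n$ is the poset $U_n\cup\{\bot\}$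 where $\bot$ is a new least element, with the topology in which $U$ is open iff $\bot\notin U$ or $U$ is cofinite. A rooted poset has width $w$ if its largest antichain has exactly $w$ elements. *)

theory Defs
  imports Main
begin

datatype elt = EltA nat | EltB nat | EltC nat nat | EltD nat nat
  | EltEa nat nat | EltEb nat nat | Bot

definition bigN :: "nat \<Rightarrow> nat" where
  "bigN n = 2 ^ (n + 1) - 1"

definition triples :: "nat \<Rightarrow> (nat \<times> nat \<times> nat) set" where
  "triples n = {(k1, k2, k3). k1 \<le> bigN n \<and> k2 \<le> bigN n \<and> k3 \<le> bigN n
      \<and> k1 \<noteq> k2 \<and> k1 \<noteq> k3 \<and> k2 \<noteq> k3}"

definition is_enum :: "nat \<Rightarrow> (nat \<Rightarrow> nat \<times> nat \<times> nat) \<Rightarrow> bool" where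
  "is_enum n s \<longleftrightarrow> bij_betw s {..<card (triples n)} (triples n)"

definition carrier :: "nat \<Rightarrow> elt set" where
  "carrier n = {Bot} \<union> range EltA \<union> range EltB
     \<union> {EltC m k | m k. k \<le> bigN n} \<union> {EltD m k | m k. k \<le> bigN n}
     \<union> {EltEa m k | m k. k \<le> bigN n} \<union> {EltEb m k | m k. k \<le> bigN n}"

definition prec :: "nat \<Rightarrow> (nat \<Rightarrow> nat \<times> nat \<times> nat) \<Rightarrow> elt \<Rightarrow> elt \<Rightarrow> bool" where
  "prec n s x y \<longleftrightarrow> x \<in> carrier n \<and> y \<in> carrier n \<and> x \<noteq> Bot \<and> y \<noteq> Bot \<and>
    ((\<exists>m k1 k2 k3. x = EltA m \<and> s (m mod card (triples n)) = (k1, k2, k3)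
        \<and> (y = EltC m k1 \<or> y = EltC m k2))
   \<or> (\<exists>m k1 k2 k3. x = EltB m \<and> s (m mod card (triples n)) = (k1, k2, k3)
        \<and> (y = EltC m k1 \<or> y = EltC m k3))
   \<or> (\<exists>m k. m \<ge> 1 \<and> x = EltC m k \<and>
        ((\<exists>j. j \<noteq> k \<and> y = EltEa (m - 1) j) \<or> (\<exists>i. y = EltEb (m - 1) i)))
   \<or> (\<exists>m k j. x = EltD m k \<and> j \<noteq> k \<and> y = EltC m j)
   \<or> (\<exists>m k. x = EltEa m k \<and> (y = EltA m \<or> (\<exists>j. j \<noteq> k \<and> y = EltD m j)))
   \<or> (\<exists>m k. x = EltEb m k \<and> (y = EltB m \<or> (\<exists>j. j \<noteq> k \<and> y = EltD m j))))"

definition leq :: "nat \<Rightarrow> (nat \<Rightarrow> nat \<times> nat \<times> nat) \<Rightarrow> elt \<Rightarrow> elt \<Rightarrow> bool" where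
  "leq n s x y \<longleftrightarrow> x \<in> carrier n \<and> y \<in> carrier n \<and>
     (x = Bot \<or> (prec n s)\<^sup>*\<^sup>* x y)"

definition antichain :: "nat \<Rightarrow> (nat \<Rightarrow> nat \<times> nat \<times> nat) \<Rightarrow> elt set \<Rightarrow> bool" where
  "antichain n s A \<longleftrightarrow> A \<subseteq> carrier n \<and>
     (\<forall>x\<in>A. \<forall>y\<in>A. x \<noteq> y \<longrightarrow> \<not> leq n s x y)"

definition has_width :: "nat \<Rightarrow> (nat \<Rightarrow> nat \<times> nat \<times> nat) \<Rightarrow> nat \<Rightarrow> bool" where
  "has_width n s w \<longleftrightarrow>
     (\<exists>A. antichain n s A \<and> finite A \<and> card A = w) \<and>
     (\<forall>A. antichain n s A \<longrightarrow> finite A \<and> card A \<le> w)"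

end

theory Submission
  imports Defs
begin

text \<open>
  All e-elements of one level have the same depth in the graded order, so they form an antichain
  of size 2(N+1). Conversely, X_n is covered by 2(N+1) chains. Across levels, every element of level m+1 or higher lies
  below every element of level m, with the single exception of the pairs c_{m+1,k}, e^a_{m,k};
  the chains are chosen so that these two never share a chain. An antichain meets every chain
  at most once.
\<close>

lemma prec_Ea_A: "k \<le> bigN n \<Longrightarrow> prec n s (EltEa m k) (EltA m)"
  by (simp add: prec_def carrier_def)

lemma prec_Eb_B: "k \<le> bigN n \<Longrightarrow> prec n s (EltEb m k) (EltB m)"
  by (simp add: prec_def carrier_def)

lemma prec_Ea_D: "\<lbrakk>k \<le> bigN n; j \<le> bigN n; j \<noteq> k\<rbrakk> \<Longrightarrow> prec n s (EltEa m k) (EltD m j)"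
  by (simp add: prec_def carrier_def)

lemma prec_Eb_D: "\<lbrakk>k \<le> bigN n; j \<le> bigN n; j \<noteq> k\<rbrakk> \<Longrightarrow> prec n s (EltEb m k) (EltD m j)"
  by (simp add: prec_def carrier_def)

lemma prec_D_C: "\<lbrakk>k \<le> bigN n; j \<le> bigN n; j \<noteq> k\<rbrakk> \<Longrightarrow> prec n s (EltD m k) (EltC m j)"
  by (simp add: prec_def carrier_def)

lemma prec_C_Ea: "\<lbrakk>k \<le> bigN n; j \<le> bigN n; j \<noteq> k\<rbrakk> \<Longrightarrow> prec n s (EltC (Suc m) k) (EltEa m j)"
  by (simp add: prec_def carrier_def)

lemma prec_C_Eb: "\<lbrakk>k \<le> bigN n; j \<le> bigN n\<rbrakk> \<Longrightarrow> prec n s (EltC (Suc m) k) (EltEb m j)"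
  by (simp add: prec_def carrier_def)

lemma carrier_iff [simp]:
  "EltA m \<in> carrier n" "EltB m \<in> carrier n" "Bot \<in> carrier n"
  "EltC m k \<in> carrier n \<longleftrightarrow> k \<le> bigN n" "EltD m k \<in> carrier n \<longleftrightarrow> k \<le> bigN n"
  "EltEa m k \<in> carrier n \<longleftrightarrow> k \<le> bigN n" "EltEb m k \<in> carrier n \<longleftrightarrow> k \<le> bigN n"
  by (auto simp: carrier_def)

fun level :: "elt \<Rightarrow> nat" where
  "level (EltA m) = m"
| "level (EltB m) = m"
| "level (EltC m k) = m"
| "level (EltD m k) = m"
| "level (EltEa m k) = m"
| "level (EltEb m k) = m"
| "level Bot = 0"

fun depth :: "elt \<Rightarrow> nat" where
  "depth (EltA m) = 4 * m + 2"
| "depth (EltB m) = 4 * m + 2"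
| "depth (EltC m k) = 4 * m + 1"
| "depth (EltD m k) = 4 * m + 2"
| "depth (EltEa m k) = 4 * m + 3"
| "depth (EltEb m k) = 4 * m + 3"
| "depth Bot = 0"

lemma depth_less_of_prec: "prec n s x y \<Longrightarrow> depth y < depth x"
  unfolding prec_def by auto

lemma depth_less_of_tranclp: "(prec n s)\<^sup>+\<^sup>+ x y \<Longrightarrow> depth y < depth x"
  by (induction rule: tranclp_induct) (auto dest: depth_less_of_prec)

lemma antichain_of_same_depth:
  assumes "A \<subseteq> carrier n - {Bot}" and "\<And>x. x \<in> A \<Longrightarrow> depth x = d"
  shows "antichain n s A"
  using assms unfolding antichain_def leq_def
  by (auto dest!: rtranclpD depth_less_of_tranclp)

lemma antichain_E_level: "antichain n s (EltEa m ` {..bigN n} \<union> EltEb m ` {..bigN n})"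
  by (rule antichain_of_same_depth[where d = "4 * m + 3"]) auto

lemma card_E_level: "card (EltEa m ` {..bigN n} \<union> EltEb m ` {..bigN n}) = 2 * Suc (bigN n)"
  by (subst card_Un_disjoint) (auto simp: card_image inj_on_def)

text \<open>
  At an even level the chains are {e^a_0, a}, {e^a_k, d_{k-1}, c_k} for 1 \<le> k \<le> N,
  {e^b_0, b}, {e^b_1, d_N, c_0} and {e^b_k} for k \<ge> 2; at odd levels the two sides are swapped.
  Bot lies below everything, so its index is arbitrary.
\<close>
fun chain_index :: "nat \<Rightarrow> elt \<Rightarrow> bool \<times> nat" where
  "chain_index N (EltA m) = (odd m, 0)"
| "chain_index N (EltEa m k) = (odd m, k)"
| "chain_index N (EltC m k) = (if k = 0 then (even m, 1) else (odd m, k))"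
| "chain_index N (EltD m k) = (if k = N then (even m, 1) else (odd m, Suc k))"
| "chain_index N (EltB m) = (even m, 0)"
| "chain_index N (EltEb m k) = (even m, k)"
| "chain_index N Bot = (True, 0)"

lemma chain_index_C_Suc_neq_Ea: "chain_index N (EltC (Suc m) k) \<noteq> chain_index N (EltEa m k)"
  by simp

locale abomination =
  fixes n :: nat and s :: "nat \<Rightarrow> nat \<times> nat \<times> nat"
  assumes enum_in_triples: "s (m mod card (triples n)) \<in> triples n"

lemma abomination_of_enum:
  assumes "1 \<le> n" and "is_enum n s"
  shows "abomination n s"
proof
  fix m
  have "(2::nat) ^ 2 \<le> 2 ^ (n + 1)" using assms(1) by (intro power_increasing) auto
  then have "2 \<le> bigN n" unfolding bigN_def by simp
  then have "(0, 1, 2) \<in> triples n" by (simp add: triples_def)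
  moreover have "finite (triples n)"
    by (rule finite_subset[of _ "{..bigN n} \<times> {..bigN n} \<times> {..bigN n}"]) (auto simp: triples_def)
  ultimately have "0 < card (triples n)" by (auto simp: card_gt_0_iff)
  then show "s (m mod card (triples n)) \<in> triples n"
    using assms(2) unfolding is_enum_def by (meson bij_betwE lessThan_iff mod_less_divisor)
qed

context abomination
begin

abbreviation N :: nat where "N \<equiv> bigN n"

abbreviation U :: "elt set" where "U \<equiv> carrier n - {Bot}"

abbreviation below :: "elt \<Rightarrow> elt \<Rightarrow> bool" (infix "\<sqsubseteq>" 50) where
  "x \<sqsubseteq> y \<equiv> (prec n s)\<^sup>*\<^sup>* x y"

lemma N_ge_2: "2 \<le> N"
  using enum_in_triples[of 0] by (auto simp: triples_def)

lemma exists_third_index: "\<exists>j\<le>N. j \<noteq> k \<and> j \<noteq> l"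
  using N_ge_2 by presburger

lemma A_le_two_C: "\<exists>i j. i \<le> N \<and> j \<le> N \<and> i \<noteq> j \<and> EltA m \<sqsubseteq> EltC m i \<and> EltA m \<sqsubseteq> EltC m j"
proof -
  obtain k1 k2 k3 where "s (m mod card (triples n)) = (k1, k2, k3)" by (metis prod_cases3)
  with enum_in_triples[of m] have "prec n s (EltA m) (EltC m k1)" "prec n s (EltA m) (EltC m k2)"
      "k1 \<le> N" "k2 \<le> N" "k1 \<noteq> k2"
    by (auto simp: prec_def carrier_def triples_def)
  then show ?thesis by blast
qed

lemma B_le_two_C: "\<exists>i j. i \<le> N \<and> j \<le> N \<and> i \<noteq> j \<and> EltB m \<sqsubseteq> EltC m i \<and> EltB m \<sqsubseteq> EltC m j"
proof -
  obtain k1 k2 k3 where "s (m mod card (triples n)) = (k1, k2, k3)" by (metis prod_cases3)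
  with enum_in_triples[of m] have "prec n s (EltB m) (EltC m k1)" "prec n s (EltB m) (EltC m k3)"
      "k1 \<le> N" "k3 \<le> N" "k1 \<noteq> k3"
    by (auto simp: prec_def carrier_def triples_def)
  then show ?thesis by blast
qed

lemma le_two_C:
  assumes "x \<in> U" and "\<nexists>k. x = EltC (level x) k"
  shows "\<exists>i j. i \<le> N \<and> j \<le> N \<and> i \<noteq> j \<and> x \<sqsubseteq> EltC (level x) i \<and> x \<sqsubseteq> EltC (level x) j"
proof (cases x)
  case (EltA m)
  then show ?thesis using A_le_two_C by simp
next
  case (EltB m)
  then show ?thesis using B_le_two_C by simp
next
  case (EltD m k)
  have "k \<le> N" using assms(1) EltD by simp
  obtain i where i: "i \<le> N" "i \<noteq> k" using exists_third_index by blast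
  obtain j where j: "j \<le> N" "j \<noteq> k" "j \<noteq> i" using exists_third_index by blast
  show ?thesis
    using prec_D_C[OF \<open>k \<le> N\<close> i(1,2)] prec_D_C[OF \<open>k \<le> N\<close> j(1,2)] i j EltD by fastforce
next
  case (EltEa m k)
  then have "prec n s x (EltA m)" using assms(1) prec_Ea_A by simp
  moreover obtain i j where "i \<le> N" "j \<le> N" "i \<noteq> j" "EltA m \<sqsubseteq> EltC m i" "EltA m \<sqsubseteq> EltC m j"
    using A_le_two_C by blast
  ultimately show ?thesis using EltEa by (auto intro: converse_rtranclp_into_rtranclp)
next
  case (EltEb m k)
  then have "prec n s x (EltB m)" using assms(1) prec_Eb_B by simp
  moreover obtain i j where "i \<le> N" "j \<le> N" "i \<noteq> j" "EltB m \<sqsubseteq> EltC m i" "EltB m \<sqsubseteq> EltC m j"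
    using B_le_two_C by blast
  ultimately show ?thesis using EltEb by (auto intro: converse_rtranclp_into_rtranclp)
qed (use assms in auto)

lemma C_Suc_le:
  assumes "y \<in> U" and "k \<le> N" and "y \<noteq> EltEa (level y) k"
  shows "EltC (Suc (level y)) k \<sqsubseteq> y"
proof (cases y)
  case (EltA m)
  obtain j where j: "j \<le> N" "j \<noteq> k" using exists_third_index by blast
  have "prec n s (EltC (Suc m) k) (EltEa m j)" "prec n s (EltEa m j) y"
    using prec_C_Ea[OF assms(2) j] prec_Ea_A[OF j(1)] EltA by auto
  then have "EltC (Suc m) k \<sqsubseteq> y" by (meson converse_rtranclp_into_rtranclp r_into_rtranclp)
  then show ?thesis using EltA by simp
next
  case (EltB m)
  have "prec n s (EltC (Suc m) k) (EltEb m 0)" "prec n s (EltEb m 0) y"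
    using prec_C_Eb[OF assms(2)] prec_Eb_B EltB by auto
  then have "EltC (Suc m) k \<sqsubseteq> y" by (meson converse_rtranclp_into_rtranclp r_into_rtranclp)
  then show ?thesis using EltB by simp
next
  case (EltC m i)
  have "i \<le> N" using assms(1) EltC by simp
  obtain j where j: "j \<le> N" "j \<noteq> i" using exists_third_index by blast
  have "prec n s (EltC (Suc m) k) (EltEb m i)" "prec n s (EltEb m i) (EltD m j)" "prec n s (EltD m j) y"
    using prec_C_Eb prec_Eb_D prec_D_C assms(2) \<open>i \<le> N\<close> j EltC by auto
  then have "EltC (Suc m) k \<sqsubseteq> y" by (meson converse_rtranclp_into_rtranclp r_into_rtranclp)
  then show ?thesis using EltC by simp
next
  case (EltD m i)
  have "i \<le> N" using assms(1) EltD by simp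
  obtain j where j: "j \<le> N" "j \<noteq> i" using exists_third_index by blast
  have "prec n s (EltC (Suc m) k) (EltEb m j)" "prec n s (EltEb m j) y"
    using prec_C_Eb prec_Eb_D assms(2) \<open>i \<le> N\<close> j EltD by auto
  then have "EltC (Suc m) k \<sqsubseteq> y" by (meson converse_rtranclp_into_rtranclp r_into_rtranclp)
  then show ?thesis using EltD by simp
next
  case (EltEa m i)
  then show ?thesis using assms prec_C_Ea by auto
next
  case (EltEb m i)
  then show ?thesis using assms prec_C_Eb by auto
qed (use assms in auto)

lemma le_of_level_Suc:
  assumes "x \<in> U" and "y \<in> U" and "level x = Suc (level y)"
    and "\<nexists>k. x = EltC (level x) k \<and> y = EltEa (level y) k"
  shows "x \<sqsubseteq> y"
proof (cases "\<exists>k. x = EltC (level x) k")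
  case True
  then obtain k where x: "x = EltC (Suc (level y)) k" using assms(3) by metis
  then have "k \<le> N" using assms(1) by simp
  then show ?thesis using C_Suc_le[OF assms(2)] assms(3,4) x by metis
next
  case False
  then obtain i j where ij: "i \<le> N" "j \<le> N" "i \<noteq> j"
    and "x \<sqsubseteq> EltC (level x) i" "x \<sqsubseteq> EltC (level x) j"
    using le_two_C[OF assms(1)] by blast
  moreover have "y \<noteq> EltEa (level y) i \<or> y \<noteq> EltEa (level y) j" using ij by (metis elt.inject(5))
  ultimately show ?thesis using C_Suc_le[OF assms(2)] assms(3) by (metis rtranclp_trans)
qed

lemma A_le_A: "m \<le> m' \<Longrightarrow> EltA m' \<sqsubseteq> EltA m"
proof (induction m' rule: dec_induct)
  case (step m')
  have "EltA (Suc m') \<sqsubseteq> EltA m'" by (rule le_of_level_Suc) auto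
  then show ?case using step.IH by (metis rtranclp_trans)
qed simp

lemma le_of_level_less:
  assumes "x \<in> U" and "y \<in> U" and "level y < level x"
    and "\<nexists>k. x = EltC (Suc (level y)) k \<and> y = EltEa (level y) k"
  shows "x \<sqsubseteq> y"
proof (cases "level x = Suc (level y)")
  case True
  then show ?thesis using le_of_level_Suc assms by metis
next
  case False
  then obtain m where m: "level x = Suc m" "Suc (level y) < Suc m" using assms(3)
    by (metis Suc_lessI not0_implies_Suc not_less0)
  have A_in_U: "EltA m' \<in> U" for m' by simp
  have "x \<sqsubseteq> EltA m" using le_of_level_Suc[OF assms(1) A_in_U] m by simp
  also have "EltA m \<sqsubseteq> EltA (Suc (level y))" using A_le_A m by simp
  also have "EltA (Suc (level y)) \<sqsubseteq> y" using le_of_level_Suc[OF A_in_U assms(2)] by simp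
  finally show ?thesis .
qed

lemma le_within_level:
  "k \<le> N \<Longrightarrow> EltEa m k \<sqsubseteq> EltA m"
  "k \<le> N \<Longrightarrow> EltEb m k \<sqsubseteq> EltB m"
  "\<lbrakk>k \<le> N; j \<le> N; j \<noteq> k\<rbrakk> \<Longrightarrow> EltEa m k \<sqsubseteq> EltD m j"
  "\<lbrakk>k \<le> N; j \<le> N; j \<noteq> k\<rbrakk> \<Longrightarrow> EltEb m k \<sqsubseteq> EltD m j"
  "\<lbrakk>k \<le> N; j \<le> N; j \<noteq> k\<rbrakk> \<Longrightarrow> EltD m k \<sqsubseteq> EltC m j"
  by (auto intro: prec_Ea_A prec_Eb_B prec_Ea_D prec_Eb_D prec_D_C)

lemma E_le_C:
  assumes "k \<le> N" and "j \<le> N"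
  shows "EltEa m k \<sqsubseteq> EltC m j" "EltEb m k \<sqsubseteq> EltC m j"
proof -
  obtain i where "i \<le> N" "i \<noteq> k" "i \<noteq> j" using exists_third_index by blast
  then show "EltEa m k \<sqsubseteq> EltC m j" "EltEb m k \<sqsubseteq> EltC m j"
    using le_within_level(3-5) assms by (metis rtranclp_trans)+
qed

lemma comparable_of_same_level:
  assumes "x \<in> U" and "y \<in> U" and "level x = level y"
    and "chain_index N x = chain_index N y"
  shows "x \<sqsubseteq> y \<or> y \<sqsubseteq> x"
  using assms N_ge_2
  by (cases x; cases y) (auto simp: le_within_level E_le_C split: if_splits)

lemma comparable_of_chain_index:
  assumes "x \<in> U" and "y \<in> U" and "chain_index N x = chain_index N y"
  shows "x \<sqsubseteq> y \<or> y \<sqsubseteq> x"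
proof -
  have le_of_less: "x \<sqsubseteq> y"
    if "x \<in> U" "y \<in> U" "level y < level x" "chain_index N x = chain_index N y" for x y
  proof (rule le_of_level_less[OF that(1-3)])
    show "\<nexists>k. x = EltC (Suc (level y)) k \<and> y = EltEa (level y) k"
      using that(4) chain_index_C_Suc_neq_Ea by metis
  qed
  show ?thesis
  proof (cases "level x" "level y" rule: linorder_cases)
    case less
    then show ?thesis using le_of_less[OF assms(2,1)] assms(3) by simp
  next
    case equal
    then show ?thesis using comparable_of_same_level assms by blast
  next
    case greater
    then show ?thesis using le_of_less[OF assms(1,2)] assms(3) by simp
  qed
qed

lemma chain_index_mem: "x \<in> carrier n \<Longrightarrow> chain_index N x \<in> UNIV \<times> {..N}"
  using N_ge_2 by (cases x) auto

lemma antichain_card_le: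
  assumes "antichain n s A"
  shows "finite A \<and> card A \<le> 2 * Suc N"
proof -
  have A: "A \<subseteq> carrier n" using assms by (simp add: antichain_def)
  have inj: "inj_on (chain_index N) A"
  proof (rule inj_onI, rule ccontr)
    fix x y assume xy: "x \<in> A" "y \<in> A" "chain_index N x = chain_index N y" "x \<noteq> y"
    then have "x \<in> carrier n" "y \<in> carrier n" using A by auto
    then have "leq n s x y \<or> leq n s y x"
      using comparable_of_chain_index[of x y] xy(3) unfolding leq_def by auto
    then show False using assms xy(1,2,4) unfolding antichain_def by metis
  qed
  have sub: "chain_index N ` A \<subseteq> UNIV \<times> {..N}"
    using A chain_index_mem by (meson image_subsetI subsetD)
  have "card (UNIV \<times> {..N} :: (bool \<times> nat) set) = 2 * Suc N"
    by (simp add: card_cartesian_product)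
  then show ?thesis
    using inj_on_finite[OF inj sub] card_inj_on_le[OF inj sub] by simp
qed

end

theorem mainTheorem5:
  fixes n :: nat and s :: "nat \<Rightarrow> nat \<times> nat \<times> nat"
  assumes "n \<ge> 2" and "is_enum n s"
  shows "has_width n s (2 ^ (n + 2))"
proof -
  interpret abomination n s using assms by (intro abomination_of_enum) simp_all
  have width: "2 ^ (n + 2) = 2 * Suc N" by (simp add: bigN_def)
  show ?thesis
    unfolding has_width_def width
    using antichain_E_level[of n s 0] card_E_level[of 0 n] antichain_card_le by auto
qed

end
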